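(* Let $G$ be a non-abelian finite simple group such that $\mathrm{Aut}(G)$ is a split extension of $\mathrm{Inn}(G)$ by a group of order $2$. Then $G$ has the eigenvalue one property.
   Context: A finite group $K$ has the eigenvalue one property if for every irreducible non-trivial $\mathbb{R}K$-module $W$ of odd dimension, affording $\sigma\colon K\to\mathrm{GL}(W)$, and every $m\in N_{\mathrm{GL}(W)}(\sigma(K))$ of finite order, there is $k\in K$ such that $\sigma(k)m$ has eigenvalue $1$. *)

theory Defs
  imports "HOL-Analysis.Analysis" "HOL-Algebra.Algebra"
begin

definition Inn :: "('a, 'b) monoid_scheme \<Rightarrow> ('a \<Rightarrow> 'a) set" where
  "Inn G = {(\<lambda>x\<in>carrier G. g \<otimes>\<^bsub>G\<^esub> x \<otimes>\<^bsub>G\<^esub> inv\<^bsub>G\<^esub> g) | g. g \<in> carrier G}"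

definition split_extension_by_order ::
    "('c, 'd) monoid_scheme \<Rightarrow> 'c set \<Rightarrow> nat \<Rightarrow> bool" where
  "split_extension_by_order A N q \<longleftrightarrow>
     N \<lhd> A \<and>
     (\<exists>C. subgroup C A \<and> finite C \<and> card C = q \<and> N \<inter> C = {\<one>\<^bsub>A\<^esub>}
          \<and> N <#>\<^bsub>A\<^esub> C = carrier A)"

definition mat_pow :: "real^'n^'n \<Rightarrow> nat \<Rightarrow> real^'n^'n" where
  "mat_pow m r = (((**) m) ^^ r) (mat 1)"

definition real_rep :: "('g, 'b) monoid_scheme \<Rightarrow> ('g \<Rightarrow> real^'n^'n) \<Rightarrow> bool" where
  "real_rep K \<sigma> \<longleftrightarrow>
     (\<forall>x\<in>carrier K. \<forall>y\<in>carrier K. \<sigma> (x \<otimes>\<^bsub>K\<^esub> y) = \<sigma> x ** \<sigma> y) \<and>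
     \<sigma> \<one>\<^bsub>K\<^esub> = mat 1"

definition irreducible_rep :: "('g, 'b) monoid_scheme \<Rightarrow> ('g \<Rightarrow> real^'n^'n) \<Rightarrow> bool" where
  "irreducible_rep K \<sigma> \<longleftrightarrow> real_rep K \<sigma> \<and>
     (\<forall>U. subspace U \<and> (\<forall>k\<in>carrier K. \<forall>u\<in>U. \<sigma> k *v u \<in> U)
          \<longrightarrow> U = {0} \<or> U = UNIV)"

definition nontrivial_rep :: "('g, 'b) monoid_scheme \<Rightarrow> ('g \<Rightarrow> real^'n^'n) \<Rightarrow> bool" where
  "nontrivial_rep K \<sigma> \<longleftrightarrow> (\<exists>k\<in>carrier K. \<sigma> k \<noteq> mat 1)"

definition in_GL_normalizer :: "('g, 'b) monoid_scheme \<Rightarrow> ('g \<Rightarrow> real^'n^'n) \<Rightarrow> real^'n^'n \<Rightarrow> bool" where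
  "in_GL_normalizer K \<sigma> m \<longleftrightarrow> invertible m \<and>
     (\<lambda>a. m ** a ** matrix_inv m) ` (\<sigma> ` carrier K) = \<sigma> ` carrier K"

definition finite_order_mat :: "real^'n^'n \<Rightarrow> bool" where
  "finite_order_mat m \<longleftrightarrow> (\<exists>r>0. mat_pow m r = mat 1)"

definition has_eigenvalue_one :: "real^'n^'n \<Rightarrow> bool" where
  "has_eigenvalue_one A \<longleftrightarrow> (\<exists>v. v \<noteq> 0 \<and> A *v v = v)"

text \<open>The eigenvalue one property, restricted to modules W = real^'n (the dimension is
  CARD('n)); the full property is this for every finite type 'n.\<close>
definition eigenvalue_one_property_dim ::
    "('n::finite) itself \<Rightarrow> ('g, 'b) monoid_scheme \<Rightarrow> bool" where
  "eigenvalue_one_property_dim _ K \<longleftrightarrow>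
     (\<forall>(\<sigma>::'g \<Rightarrow> real^('n::finite)^'n) (m::real^'n^'n).
        odd CARD('n) \<and> irreducible_rep K \<sigma> \<and> nontrivial_rep K \<sigma> \<and>
        in_GL_normalizer K \<sigma> m \<and> finite_order_mat m
        \<longrightarrow> (\<exists>k\<in>carrier K. has_eigenvalue_one (\<sigma> k ** m)))"

end

theory Submission
  imports Defs
begin

(* A real irreducible module of odd dimension is absolutely irreducible: a real matrix of odd
   size has a real eigenvalue, so by Schur's lemma everything commuting with sigma(G) is scalar.
   Averaging then gives the Frobenius-Schur count  trace (SUM g. sigma(g)^2) = |G|.  For odd |G|
   squaring permutes G and SUM g. sigma(g) = 0 for non-trivial sigma, so |G| is even and G
   contains an involution t.

   For simple G, sigma is faithful, so m induces an automorphism alpha of G, and the split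
   extension writes alpha = (conjugation by h) o c with c o c = id.  Then T = sigma(h)^-1 m
   satisfies T sigma(x) = sigma(c x) T, so T^2 centralises sigma(G) and is a scalar; since
   |det T| = 1 and the dimension is odd, T^2 = 1.  Either T has eigenvalue 1, or T = -1 and
   sigma(t) T has eigenvalue 1. *)

section \<open>Real matrices\<close>

lemma det_scaleR:
  fixes A :: "real^'n^'n"
  shows "det (c *\<^sub>R A) = c ^ CARD('n) * det A"
proof -
  have "(\<Prod>i\<in>UNIV. (c *\<^sub>R A)$i$p i) = c ^ CARD('n) * (\<Prod>i\<in>UNIV. A$i$p i)" for p
    by (simp add: prod.distrib)
  then show ?thesis unfolding det_def by (simp add: sum_distrib_left algebra_simps)
qed

lemma continuous_on_det_affine:
  fixes P Q :: "real^'n^'n"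
  shows "continuous_on S (\<lambda>s. det (P + s *\<^sub>R Q))"
  unfolding det_def by (intro continuous_intros)

lemma eventually_det_shift_pos:
  fixes B :: "real^'n^'n"
  shows "eventually (\<lambda>t. det (t *\<^sub>R mat 1 + B) > 0) at_top"
proof -
  have "isCont (\<lambda>s. det (mat 1 + s *\<^sub>R B)) 0"
    using continuous_on_det_affine[of UNIV "mat 1" B] by (simp add: continuous_on_eq_continuous_at)
  then have "eventually (\<lambda>s. det (mat 1 + s *\<^sub>R B) > 0) (at 0)"
    unfolding isCont_def by (rule order_tendstoD(1)) simp
  then have "eventually (\<lambda>s. det (mat 1 + s *\<^sub>R B) > 0) (at_right 0)"
    by (simp add: eventually_at_split)
  then have "eventually (\<lambda>t. det (mat 1 + inverse t *\<^sub>R B) > 0) at_top"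
    using eventually_compose_filterlim[OF _ filterlim_inverse_at_right_top] by blast
  with eventually_gt_at_top[of 0] show ?thesis
  proof eventually_elim
    case (elim t)
    then have t: "t > 0" and pos: "det (mat 1 + inverse t *\<^sub>R B) > 0" by auto
    have "t *\<^sub>R mat 1 + B = t *\<^sub>R (mat 1 + inverse t *\<^sub>R B)"
      using t by (simp add: algebra_simps)
    then show "det (t *\<^sub>R mat 1 + B) > 0" using t pos by (simp add: det_scaleR)
  qed
qed

lemma odd_dim_real_eigenvector:
  fixes A :: "real^'n^'n"
  assumes "odd CARD('n)"
  shows "\<exists>c v. v \<noteq> 0 \<and> A *v v = c *\<^sub>R v"
proof -
  obtain T where T: "T > 0" "det (T *\<^sub>R mat 1 + A) > 0" "det (T *\<^sub>R mat 1 + - A) > 0"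
    using eventually_conj[OF eventually_gt_at_top[of 0]
        eventually_conj[OF eventually_det_shift_pos[of A] eventually_det_shift_pos[of "- A"]]]
    unfolding eventually_at_top_linorder by blast
  define f where "f s = det (A + s *\<^sub>R (- mat 1))" for s
  have "f (- T) > 0" using T(2) by (simp add: f_def add.commute)
  have "A + T *\<^sub>R (- mat 1) = (- 1) *\<^sub>R (T *\<^sub>R mat 1 + - A)" by (simp add: algebra_simps)
  then have "f T = (- 1) ^ CARD('n) * det (T *\<^sub>R mat 1 + - A)"
    by (simp only: f_def det_scaleR)
  then have "f T < 0" using T(3) assms by simp
  have "continuous_on {- T..T} f" unfolding f_def by (rule continuous_on_det_affine)
  then obtain c where "f c = 0"
    using IVT2'[of f T 0 "- T"] \<open>f (- T) > 0\<close> \<open>f T < 0\<close> T(1) by fastforce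
  then have "\<not> invertible (A + c *\<^sub>R (- mat 1))" by (simp add: f_def invertible_det_nz)
  then obtain v where v: "v \<noteq> 0" "(A + c *\<^sub>R (- mat 1)) *v v = 0"
    using matrix_left_invertible_ker invertible_left_inverse by blast
  have "(A + c *\<^sub>R (- mat 1)) *v v = A *v v - c *\<^sub>R v"
    by (simp add: algebra_simps scaleR_matrix_vector_assoc[symmetric])
  then show ?thesis using v by auto
qed

lemma matrix_add_rdistrib:
  fixes A :: "'a::semiring_1^'p^'n" and B C :: "'a^'n^'m"
  shows "(B + C) ** A = B ** A + C ** A"
  by (vector matrix_matrix_mult_def sum.distrib[symmetric] field_simps)

lemma sum_matrix_mult_left:
  fixes B :: "'a::semiring_1^'p^'n" and F :: "'b \<Rightarrow> 'a^'n^'m"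
  shows "(\<Sum>g\<in>S. F g) ** B = (\<Sum>g\<in>S. F g ** B)"
  by (induction S rule: infinite_finite_induct) (simp_all add: matrix_add_rdistrib)

lemma sum_matrix_mult_right:
  fixes B :: "'a::semiring_1^'n^'m" and F :: "'b \<Rightarrow> 'a^'p^'n"
  shows "B ** (\<Sum>g\<in>S. F g) = (\<Sum>g\<in>S. B ** F g)"
  by (induction S rule: infinite_finite_induct) (simp_all add: matrix_add_ldistrib)

lemma sum_matrix_vector_mult:
  fixes x :: "'a::semiring_1^'n" and F :: "'b \<Rightarrow> 'a^'n^'m"
  shows "(\<Sum>g\<in>S. F g) *v x = (\<Sum>g\<in>S. F g *v x)"
  by (induction S rule: infinite_finite_induct) (simp_all add: matrix_vector_mult_add_rdistrib)

lemma trace_sum: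
  fixes F :: "'b \<Rightarrow> 'a::semiring_1^'n^'n"
  shows "trace (\<Sum>g\<in>S. F g) = (\<Sum>g\<in>S. trace (F g))"
  unfolding trace_def by (simp add: sum.swap[of _ S])

lemma trace_scaleR_mat_1: "trace (c *\<^sub>R (mat 1 :: real^'n^'n)) = c * real CARD('n)"
  unfolding trace_def by (simp add: mat_def)

definition matrix_unit :: "'n \<Rightarrow> 'n \<Rightarrow> real^'n^'n" where
  "matrix_unit j k = (\<chi> a b. if a = j \<and> b = k then 1 else 0)"

lemma matrix_unit_sandwich_nth:
  fixes A B :: "real^'n^'n"
  shows "(A ** matrix_unit j k ** B)$i$l = A$i$j * B$k$l"
proof -
  have "(A ** matrix_unit j k)$i$b = (if b = k then A$i$j else 0)" for b
    unfolding matrix_matrix_mult_def matrix_unit_def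
    by (simp add: if_distrib[of "\<lambda>x. _ * x"] cong: if_cong)
  then show ?thesis
    unfolding matrix_matrix_mult_def[of "A ** matrix_unit j k"]
    by (simp add: if_distrib[of "\<lambda>x. x * _"] cong: if_cong)
qed

lemma trace_matrix_unit: "trace (matrix_unit j k) = (if j = k then 1 else 0)"
  unfolding trace_def matrix_unit_def by (cases "j = k") (auto intro!: sum.neutral)

lemma invertible_matrix_inv:
  fixes A :: "'a::semiring_1^'n^'m"
  assumes "invertible A"
  shows "A ** matrix_inv A = mat 1" "matrix_inv A ** A = mat 1"
  using someI_ex[OF assms[unfolded invertible_def]] unfolding matrix_inv_def by auto

lemma inner_transpose_mult_self:
  fixes A :: "real^'n^'n"
  shows "inner x ((transpose A ** A) *v x) = inner (A *v x) (A *v x)"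
proof -
  have "(transpose A ** A) *v x = (A *v x) v* A"
    by (simp add: matrix_vector_mul_assoc[symmetric])
  then show ?thesis by (metis dot_lmul_matrix inner_commute)
qed

lemma uminus_matrix_vector_mult: "(- A :: 'a::ring_1^'n^'m) *v x = - (A *v x)"
  by (simp add: vec_eq_iff matrix_vector_mult_def sum_negf)

lemma matrix_vector_mult_uminus: "(A :: 'a::ring_1^'n^'m) *v (- x) = - (A *v x)"
  by (simp add: vec_eq_iff matrix_vector_mult_def sum_negf)

lemma involution_eigenvector_neg_one:
  fixes T :: "real^'n^'n"
  assumes "T ** T = mat 1" "T \<noteq> mat 1"
  shows "\<exists>w. w \<noteq> 0 \<and> T *v w = - w"
proof -
  obtain x where x: "T *v x \<noteq> x" using assms(2) matrix_eq[of T "mat 1"] by auto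
  have "T *v (T *v x - x) = - (T *v x - x)"
    using assms(1) by (simp add: matrix_vector_mult_diff_distrib matrix_vector_mul_assoc)
  then show ?thesis using x by (metis eq_iff_diff_eq_0)
qed

lemma involution_eigenvector_one:
  fixes T :: "real^'n^'n"
  assumes "T ** T = mat 1" "T \<noteq> - mat 1"
  shows "\<exists>w. w \<noteq> 0 \<and> T *v w = w"
proof -
  obtain x where x: "T *v x \<noteq> - x"
    using assms(2) matrix_eq[of T "- mat 1"] by (auto simp: uminus_matrix_vector_mult)
  have "T *v (T *v x + x) = T *v x + x"
    using assms(1) by (simp add: matrix_vector_right_distrib matrix_vector_mul_assoc)
  then show ?thesis using x by (metis add_eq_0_iff minus_minus)
qed

lemma scalar_square_eq_mat_1:
  fixes T :: "real^'n^'n"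
  assumes "odd CARD('n)" "T ** T = c *\<^sub>R mat 1" "\<bar>det T\<bar> = 1"
  shows "T ** T = mat 1"
proof -
  have "det T * det T = 1" using assms(3) by (metis abs_mult_self_eq mult_1)
  then have "c ^ CARD('n) = 1"
    using assms(2) det_scaleR[of c "mat 1 :: real^'n^'n"] by (metis det_I det_mul mult_1_right)
  then have "\<bar>c\<bar> = 1" using power_eq_1_iff[of c "CARD('n)"] by simp
  moreover have "c \<noteq> - 1" using \<open>c ^ CARD('n) = 1\<close> assms(1) by auto
  ultimately have "c = 1" by (auto simp: abs_if split: if_splits)
  then show ?thesis using assms(2) by simp
qed

lemma det_mat_pow: "det (mat_pow m r) = det m ^ r"
  by (induction r) (simp_all add: mat_pow_def det_mul)

lemma abs_det_finite_order:
  fixes m :: "real^'n^'n"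
  assumes "finite_order_mat m"
  shows "\<bar>det m\<bar> = 1"
proof -
  obtain r where "r > 0" "mat_pow m r = mat 1" using assms unfolding finite_order_mat_def by blast
  then have "det m ^ r = 1" by (metis det_I det_mat_pow)
  then show ?thesis using \<open>r > 0\<close> power_eq_1_iff[of "det m" r] by simp
qed

section \<open>Finite groups and their real representations\<close>

lemma (in group) sum_mult_left_reindex:
  assumes "h \<in> carrier G"
  shows "(\<Sum>g\<in>carrier G. f (h \<otimes> g)) = (\<Sum>g\<in>carrier G. f g)"
  by (rule sum.reindex_bij_witness[where i = "\<lambda>g. inv h \<otimes> g" and j = "\<lambda>g. h \<otimes> g"])
    (use assms in \<open>auto simp: m_assoc[symmetric]\<close>)

lemma (in group) sum_mult_right_reindex:
  assumes "h \<in> carrier G"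
  shows "(\<Sum>g\<in>carrier G. f (g \<otimes> h)) = (\<Sum>g\<in>carrier G. f g)"
  by (rule sum.reindex_bij_witness[where i = "\<lambda>g. g \<otimes> inv h" and j = "\<lambda>g. g \<otimes> h"])
    (use assms in \<open>auto simp: m_assoc\<close>)

lemma (in group) subgroup_card_2_square:
  assumes "subgroup H G" "card H = 2" "x \<in> H"
  shows "x \<otimes> x = \<one>"
proof -
  interpret H: subgroup H G by fact
  obtain y where H: "H = {\<one>, y}" and "y \<noteq> \<one>"
    using assms(2) H.one_closed by (metis card_2_iff doubleton_eq_iff insertE singletonD)
  then have "y \<in> H" by blast
  then have "y \<in> carrier G" "y \<otimes> y \<in> H" by auto
  moreover have "y \<otimes> y \<noteq> y" using \<open>y \<in> carrier G\<close> \<open>y \<noteq> \<one>\<close> by simp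
  ultimately have "y \<otimes> y = \<one>" using H by auto
  then show ?thesis using assms(3) H by auto
qed

lemma (in group) even_order_involution:
  assumes "finite (carrier G)" "even (order G)"
  shows "\<exists>t\<in>carrier G. t \<noteq> \<one> \<and> t \<otimes> t = \<one>"
proof -
  have "order G = 2 ^ 1 * (order G div 2)" using assms(2) by simp
  then obtain H where H: "subgroup H G" "card H = 2"
    using sylow_thm[of 2 G 1 "order G div 2"] is_group assms(1) by auto
  then obtain t where "t \<in> H" "t \<noteq> \<one>" by (metis card_2_iff insertCI)
  then show ?thesis using H subgroup_card_2_square subgroup.subset by blast
qed

lemma (in group) odd_order_bij_square:
  assumes "finite (carrier G)" "odd (order G)"
  shows "bij_betw (\<lambda>g. g \<otimes> g) (carrier G) (carrier G)"
proof -
  define k where "k = (order G + 1) div 2"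
  have root: "(g [^] k) \<otimes> (g [^] k) = g" if "g \<in> carrier G" for g
  proof -
    have "2 * k = order G + 1" using assms(2) unfolding k_def by presburger
    then have "(g [^] k) \<otimes> (g [^] k) = g [^] order G \<otimes> g [^] (1::nat)"
      using that by (simp add: nat_pow_mult mult_2[symmetric])
    then show ?thesis using that assms(1) pow_order_eq_1 by simp
  qed
  have "(g \<otimes> g) [^] k = g" if "g \<in> carrier G" for g
    using root[OF that] that by (simp add: pow_mult_distrib)
  then show ?thesis
    by (intro bij_betw_byWitness[where f' = "\<lambda>g. g [^] k"]) (auto simp: root)
qed

lemma real_rep_mult:
  "real_rep G \<sigma> \<Longrightarrow> x \<in> carrier G \<Longrightarrow> y \<in> carrier G \<Longrightarrow> \<sigma> (x \<otimes>\<^bsub>G\<^esub> y) = \<sigma> x ** \<sigma> y"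
  unfolding real_rep_def by auto

lemma real_rep_one: "real_rep G \<sigma> \<Longrightarrow> \<sigma> \<one>\<^bsub>G\<^esub> = mat 1"
  unfolding real_rep_def by auto

lemma real_rep_inv:
  assumes "group G" "real_rep G \<sigma>" "x \<in> carrier G"
  shows "\<sigma> x ** \<sigma> (inv\<^bsub>G\<^esub> x) = mat 1" "\<sigma> (inv\<^bsub>G\<^esub> x) ** \<sigma> x = mat 1"
  using assms
  by (metis group.inv_closed group.r_inv real_rep_mult real_rep_one,
      metis group.inv_closed group.l_inv real_rep_mult real_rep_one)

lemma real_rep_nat_pow:
  fixes G (structure)
  assumes "group G" "real_rep G \<sigma>" "x \<in> carrier G"
  shows "\<sigma> (x [^] r) = mat_pow (\<sigma> x) r"
proof -
  interpret group G by fact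
  show ?thesis
  proof (induction r)
    case 0
    then show ?case using real_rep_one[OF assms(2)] by (simp add: mat_pow_def)
  next
    case (Suc r)
    have "\<sigma> (x [^] Suc r) = \<sigma> (x \<otimes> x [^] r)" using assms(3) nat_pow_Suc2 by simp
    then show ?case using Suc real_rep_mult[OF assms(2)] assms(3) by (simp add: mat_pow_def)
  qed
qed

lemma real_rep_abs_det:
  assumes "group G" "finite (carrier G)" "real_rep G \<sigma>" "x \<in> carrier G"
  shows "\<bar>det (\<sigma> x)\<bar> = 1"
proof (rule abs_det_finite_order)
  have "order G > 0" using assms(1,2) monoid.order_gt_0_iff_finite group.is_monoid by blast
  moreover have "mat_pow (\<sigma> x) (order G) = mat 1"
    using assms real_rep_nat_pow real_rep_one group.pow_order_eq_1 by metis
  ultimately show "finite_order_mat (\<sigma> x)" unfolding finite_order_mat_def by blast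
qed

lemma real_rep_kernel_normal:
  fixes G (structure)
  assumes "group G" "real_rep G \<sigma>"
  shows "{x \<in> carrier G. \<sigma> x = mat 1} \<lhd> G"
proof -
  interpret group G by fact
  have "\<sigma> (inv a) = mat 1" if "a \<in> carrier G" "\<sigma> a = mat 1" for a
    using real_rep_inv(2)[OF assms that(1)] that(2) by simp
  then have "subgroup {x \<in> carrier G. \<sigma> x = mat 1} G"
    using real_rep_one[OF assms(2)] real_rep_mult[OF assms(2)] by (intro subgroupI) auto
  then show ?thesis
    unfolding normal_inv_iff
    using real_rep_mult[OF assms(2)] real_rep_inv[OF assms] by auto
qed

lemma simple_group_real_rep_inj_on:
  fixes G (structure)
  assumes "simple_group G" "real_rep G \<sigma>" "nontrivial_rep G \<sigma>"
  shows "inj_on \<sigma> (carrier G)"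
proof (rule inj_onI)
  interpret simple_group G by fact
  have "{x \<in> carrier G. \<sigma> x = mat 1} = {\<one>}"
    using no_real_normal_subgroup[OF real_rep_kernel_normal[OF is_group assms(2)]] assms(3)
    unfolding nontrivial_rep_def by auto
  moreover fix x y assume "x \<in> carrier G" "y \<in> carrier G" "\<sigma> x = \<sigma> y"
  then have "\<sigma> (x \<otimes> inv y) = mat 1" "x \<otimes> inv y \<in> carrier G"
    using real_rep_mult[OF assms(2)] real_rep_inv[OF is_group assms(2)] by auto
  ultimately have "x \<otimes> inv y = \<one>" by blast
  then show "x = y"
    using \<open>x \<in> carrier G\<close> \<open>y \<in> carrier G\<close> by (metis inv_closed inv_equality inv_inv)
qed

lemma irreducible_rep_commutant_scalar:
  fixes \<sigma> :: "'g \<Rightarrow> real^'n^'n"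
  assumes "odd CARD('n)" "irreducible_rep K \<sigma>"
    and "\<And>k. k \<in> carrier K \<Longrightarrow> A ** \<sigma> k = \<sigma> k ** A"
  shows "\<exists>c. A = c *\<^sub>R mat 1"
proof -
  obtain c v where v: "v \<noteq> 0" "A *v v = c *\<^sub>R v" using odd_dim_real_eigenvector[OF assms(1)] by blast
  define U where "U = {x. A *v x = c *\<^sub>R x}"
  have "subspace U" unfolding subspace_def U_def
    by (simp add: algebra_simps)
  moreover have "\<sigma> k *v u \<in> U" if "k \<in> carrier K" "u \<in> U" for k u
  proof -
    have "A *v (\<sigma> k *v u) = \<sigma> k *v (A *v u)"
      using assms(3)[OF that(1)] by (metis matrix_vector_mul_assoc)
    then show ?thesis using that(2) unfolding U_def by (simp add: matrix_vector_mult_scaleR)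
  qed
  ultimately have "U = {0} \<or> U = UNIV" using assms(2) unfolding irreducible_rep_def by blast
  then have "U = UNIV" using v unfolding U_def by auto
  then have "A *v x = (c *\<^sub>R mat 1) *v x" for x
    unfolding U_def by (auto simp: scaleR_matrix_vector_assoc[symmetric])
  then show ?thesis using matrix_eq by blast
qed

section \<open>Irreducible representations of odd dimension\<close>

locale odd_dim_irrep = group G for G :: "('g, 'b) monoid_scheme" (structure) +
  fixes \<sigma> :: "'g \<Rightarrow> real^'n^'n"
  assumes finite_carrier: "finite (carrier G)"
    and odd_dim: "odd CARD('n)"
    and irreducible: "irreducible_rep G \<sigma>"
begin

lemma rep: "real_rep G \<sigma>"
  using irreducible unfolding irreducible_rep_def by simp

lemma rep_mult: "x \<in> carrier G \<Longrightarrow> y \<in> carrier G \<Longrightarrow> \<sigma> (x \<otimes> y) = \<sigma> x ** \<sigma> y"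
  using real_rep_mult[OF rep] .

lemma rep_inv:
  "x \<in> carrier G \<Longrightarrow> \<sigma> x ** \<sigma> (inv x) = mat 1"
  "x \<in> carrier G \<Longrightarrow> \<sigma> (inv x) ** \<sigma> x = mat 1"
  using real_rep_inv[OF is_group rep] by auto

lemma commutant_scalar:
  "(\<And>k. k \<in> carrier G \<Longrightarrow> A ** \<sigma> k = \<sigma> k ** A) \<Longrightarrow> \<exists>c. A = c *\<^sub>R mat 1"
  using irreducible_rep_commutant_scalar[OF odd_dim irreducible] by blast

lemma sum_conj_rep:
  "(\<Sum>g\<in>carrier G. \<sigma> g ** Q ** \<sigma> (inv g)) = (order G * trace Q / CARD('n)) *\<^sub>R mat 1"
proof -
  define T where "T = (\<Sum>g\<in>carrier G. \<sigma> g ** Q ** \<sigma> (inv g))"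
  have "T ** \<sigma> h = \<sigma> h ** T" if h: "h \<in> carrier G" for h
  proof -
    have "\<sigma> h ** T = (\<Sum>g\<in>carrier G. \<sigma> (h \<otimes> g) ** Q ** \<sigma> (inv g))"
      unfolding T_def sum_matrix_mult_right using h
      by (intro sum.cong) (auto simp: rep_mult matrix_mul_assoc)
    also have "\<dots> = (\<Sum>g\<in>carrier G. (\<lambda>g. \<sigma> g ** Q ** \<sigma> (inv g \<otimes> h)) (h \<otimes> g))"
      using h by (intro sum.cong) (auto simp: inv_mult_group m_assoc)
    also have "\<dots> = (\<Sum>g\<in>carrier G. \<sigma> g ** Q ** \<sigma> (inv g \<otimes> h))"
      by (rule sum_mult_left_reindex[OF h])
    also have "\<dots> = T ** \<sigma> h"
      unfolding T_def sum_matrix_mult_left using h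
      by (intro sum.cong) (auto simp: rep_mult matrix_mul_assoc)
    finally show ?thesis by simp
  qed
  then obtain c where c: "T = c *\<^sub>R mat 1" using commutant_scalar by blast
  have "trace (\<sigma> g ** Q ** \<sigma> (inv g)) = trace Q" if "g \<in> carrier G" for g
    using trace_mul_sym[of "\<sigma> g ** Q" "\<sigma> (inv g)"] rep_inv(2)[OF that]
    by (simp add: matrix_mul_assoc)
  then have "trace T = order G * trace Q"
    unfolding T_def trace_sum order_def by simp
  then have "c = order G * trace Q / CARD('n)"
    using c trace_scaleR_mat_1[of c, where 'n = 'n] by (simp add: field_simps)
  then show ?thesis using c T_def by simp
qed

lemma sum_rep_nth_mult_inv_nth:
  "(\<Sum>g\<in>carrier G. \<sigma> g $ i $ j * \<sigma> (inv g) $ k $ l)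
     = (if j = k \<and> i = l then order G / CARD('n) else 0)"
proof -
  have "(\<Sum>g\<in>carrier G. \<sigma> g $ i $ j * \<sigma> (inv g) $ k $ l)
      = (\<Sum>g\<in>carrier G. \<sigma> g ** matrix_unit j k ** \<sigma> (inv g)) $ i $ l"
    by (simp add: matrix_unit_sandwich_nth)
  then show ?thesis
    unfolding sum_conj_rep by (simp add: trace_matrix_unit mat_def)
qed

definition invariant_form :: "real^'n^'n" where
  "invariant_form = (\<Sum>g\<in>carrier G. transpose (\<sigma> g) ** \<sigma> g)"

lemma invariant_form_symmetric: "invariant_form $ i $ j = invariant_form $ j $ i"
  unfolding invariant_form_def by (simp add: matrix_matrix_mult_def transpose_def mult.commute)

lemma invertible_invariant_form: "invertible invariant_form"
proof -
  have "x = 0" if x: "invariant_form *v x = 0" for x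
  proof -
    have "inner x (invariant_form *v x) = (\<Sum>g\<in>carrier G. inner (\<sigma> g *v x) (\<sigma> g *v x))"
      unfolding invariant_form_def sum_matrix_vector_mult inner_sum_right inner_transpose_mult_self ..
    also have "\<dots> \<ge> inner (\<sigma> \<one> *v x) (\<sigma> \<one> *v x)"
      by (rule member_le_sum) (use finite_carrier in auto)
    finally have "inner x x \<le> 0" using x real_rep_one[OF rep] by simp
    then show "x = 0" by (metis inner_gt_zero_iff not_le)
  qed
  then show ?thesis using matrix_left_invertible_ker invertible_left_inverse by blast
qed

lemma invariant_form_invariant:
  assumes "h \<in> carrier G"
  shows "transpose (\<sigma> h) ** invariant_form ** \<sigma> h = invariant_form"
proof -
  have "transpose (\<sigma> h) ** invariant_form ** \<sigma> h
      = (\<Sum>g\<in>carrier G. (\<lambda>g. transpose (\<sigma> g) ** \<sigma> g) (g \<otimes> h))"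
    unfolding invariant_form_def sum_matrix_mult_left sum_matrix_mult_right using assms
    by (intro sum.cong) (auto simp: rep_mult matrix_transpose_mul matrix_mul_assoc)
  also have "\<dots> = invariant_form" unfolding invariant_form_def by (rule sum_mult_right_reindex[OF assms])
  finally show ?thesis .
qed

lemma transpose_rep:
  assumes "g \<in> carrier G"
  shows "transpose (\<sigma> g) = invariant_form ** \<sigma> (inv g) ** matrix_inv invariant_form"
proof -
  note F = invertible_matrix_inv[OF invertible_invariant_form]
  have "transpose (\<sigma> g) ** invariant_form = invariant_form ** \<sigma> (inv g)"
    using invariant_form_invariant[OF assms] rep_inv(1)[OF assms]
    by (metis matrix_mul_assoc matrix_mul_rid)
  then show ?thesis using F by (metis matrix_mul_assoc matrix_mul_rid)
qed

lemma sum_rep_nth_mult_transpose_nth: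
  "(\<Sum>g\<in>carrier G. \<sigma> g $ i $ j * transpose (\<sigma> g) $ i $ j)
     = order G / CARD('n) * (invariant_form $ i $ j * matrix_inv invariant_form $ i $ j)"
proof -
  let ?F = invariant_form and ?F' = "matrix_inv invariant_form"
  have "(\<Sum>g\<in>carrier G. \<sigma> g $ i $ j * transpose (\<sigma> g) $ i $ j)
      = (\<Sum>g\<in>carrier G. \<sigma> g $ i $ j *\<^sub>R (?F ** \<sigma> (inv g) ** ?F')) $ i $ j"
    by (simp add: transpose_rep cong: sum.cong)
  also have "(\<Sum>g\<in>carrier G. \<sigma> g $ i $ j *\<^sub>R (?F ** \<sigma> (inv g) ** ?F'))
      = ?F ** (\<Sum>g\<in>carrier G. \<sigma> g $ i $ j *\<^sub>R \<sigma> (inv g)) ** ?F'"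
    unfolding sum_matrix_mult_left sum_matrix_mult_right
    by (simp add: matrix_scalar_ac scalar_matrix_assoc)
  also have "(\<Sum>g\<in>carrier G. \<sigma> g $ i $ j *\<^sub>R \<sigma> (inv g)) = (order G / CARD('n)) *\<^sub>R matrix_unit j i"
    by (simp add: vec_eq_iff sum_rep_nth_mult_inv_nth matrix_unit_def)
  also have "?F ** ((order G / CARD('n)) *\<^sub>R matrix_unit j i) ** ?F'
      = (order G / CARD('n)) *\<^sub>R (?F ** matrix_unit j i ** ?F')"
    by (metis matrix_scalar_ac scalar_matrix_assoc)
  finally show ?thesis by (simp add: matrix_unit_sandwich_nth)
qed

(* Frobenius-Schur: transpose (sigma g) is conjugate to sigma (inv g) by the invariant form, so the
   orthogonality relations above evaluate the sum of the squares. *)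

lemma trace_sum_rep_square: "trace (\<Sum>g\<in>carrier G. \<sigma> g ** \<sigma> g) = order G"
proof -
  let ?F = invariant_form and ?F' = "matrix_inv invariant_form"
  have "trace (\<Sum>g\<in>carrier G. \<sigma> g ** \<sigma> g)
     = (\<Sum>g\<in>carrier G. \<Sum>i\<in>UNIV. \<Sum>j\<in>UNIV. \<sigma> g $ i $ j * transpose (\<sigma> g) $ i $ j)"
    unfolding trace_sum by (simp add: trace_def matrix_matrix_mult_def transpose_def)
  also have "\<dots> = (\<Sum>i\<in>UNIV. \<Sum>j\<in>UNIV. \<Sum>g\<in>carrier G. \<sigma> g $ i $ j * transpose (\<sigma> g) $ i $ j)"
    by (simp add: sum.swap[of _ "carrier G"])
  also have "\<dots> = (\<Sum>i\<in>UNIV. \<Sum>j\<in>UNIV. order G / CARD('n) * (?F $ j $ i * ?F' $ i $ j))"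
    by (simp add: sum_rep_nth_mult_transpose_nth invariant_form_symmetric[of i j for i j])
  also have "\<dots> = order G / CARD('n) * (\<Sum>i\<in>UNIV. \<Sum>j\<in>UNIV. ?F $ j $ i * ?F' $ i $ j)"
    by (simp add: sum_distrib_left)
  also have "(\<Sum>i\<in>UNIV. \<Sum>j\<in>UNIV. ?F $ j $ i * ?F' $ i $ j)
      = (\<Sum>j\<in>UNIV. \<Sum>i\<in>UNIV. ?F $ j $ i * ?F' $ i $ j)"
    by (rule sum.swap)
  also have "(\<Sum>j\<in>UNIV. \<Sum>i\<in>UNIV. ?F $ j $ i * ?F' $ i $ j) = trace (?F ** ?F')"
    unfolding trace_def matrix_matrix_mult_def by simp
  also have "\<dots> = CARD('n)"
    using invertible_matrix_inv[OF invertible_invariant_form] trace_I by simp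
  finally show ?thesis by simp
qed

lemma sum_rep_eq_0:
  assumes "nontrivial_rep G \<sigma>"
  shows "(\<Sum>g\<in>carrier G. \<sigma> g) = 0"
proof -
  define S where "S = (\<Sum>g\<in>carrier G. \<sigma> g)"
  have left: "\<sigma> h ** S = S" if "h \<in> carrier G" for h
    unfolding S_def sum_matrix_mult_right
    using sum_mult_left_reindex[OF that, of \<sigma>] that by (simp add: rep_mult cong: sum.cong)
  have "S ** \<sigma> h = S" if "h \<in> carrier G" for h
    unfolding S_def sum_matrix_mult_left
    using sum_mult_right_reindex[OF that, of \<sigma>] that by (simp add: rep_mult cong: sum.cong)
  then obtain c where c: "S = c *\<^sub>R mat 1" using commutant_scalar left by metis
  obtain h where "h \<in> carrier G" "\<sigma> h \<noteq> mat 1" using assms unfolding nontrivial_rep_def by blast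
  moreover have "c *\<^sub>R \<sigma> h = c *\<^sub>R mat 1" using left[OF \<open>h \<in> carrier G\<close>] c
    by (simp add: matrix_scalar_ac)
  ultimately have "c = 0" by simp
  then show ?thesis using c S_def by simp
qed

lemma even_order:
  assumes "nontrivial_rep G \<sigma>"
  shows "even (order G)"
proof (rule ccontr)
  assume "odd (order G)"
  then have "bij_betw (\<lambda>g. g \<otimes> g) (carrier G) (carrier G)"
    using odd_order_bij_square finite_carrier by blast
  then have "(\<Sum>g\<in>carrier G. \<sigma> (g \<otimes> g)) = (\<Sum>g\<in>carrier G. \<sigma> g)"
    by (rule sum.reindex_bij_betw)
  then have "trace (\<Sum>g\<in>carrier G. \<sigma> g ** \<sigma> g) = 0"
    using sum_rep_eq_0[OF assms] by (simp add: rep_mult trace_def cong: sum.cong)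
  then show False
    using trace_sum_rep_square finite_carrier order_gt_0_iff_finite by simp
qed

end

section \<open>Normalisers of the image of a faithful representation\<close>

lemma normalizer_induces_auto:
  fixes G (structure) and \<sigma> :: "'g \<Rightarrow> real^'n^'n"
  assumes "group G" "real_rep G \<sigma>" "inj_on \<sigma> (carrier G)" "in_GL_normalizer G \<sigma> m"
  shows "\<exists>\<alpha>\<in>auto G. \<forall>x\<in>carrier G. \<sigma> (\<alpha> x) = m ** \<sigma> x ** matrix_inv m"
proof -
  interpret group G by fact
  let ?conj = "\<lambda>A. m ** A ** matrix_inv m"
  have m: "m ** matrix_inv m = mat 1" "matrix_inv m ** m = mat 1"
    using assms(4) invertible_matrix_inv unfolding in_GL_normalizer_def by auto
  have image: "?conj ` \<sigma> ` carrier G = \<sigma> ` carrier G"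
    using assms(4) unfolding in_GL_normalizer_def by simp
  have conj_mult: "?conj (A ** B) = ?conj A ** ?conj B" for A B
    using m by (metis matrix_mul_assoc matrix_mul_rid)
  have conj_inj: "inj ?conj"
    by (rule inj_on_inverseI[where g = "\<lambda>A. matrix_inv m ** A ** m"])
      (use m in \<open>metis matrix_mul_assoc matrix_mul_lid matrix_mul_rid\<close>)
  define \<alpha> where "\<alpha> = (\<lambda>x\<in>carrier G. the_inv_into (carrier G) \<sigma> (?conj (\<sigma> x)))"
  have \<alpha>: "\<alpha> x \<in> carrier G" "\<sigma> (\<alpha> x) = ?conj (\<sigma> x)" if "x \<in> carrier G" for x
  proof -
    have "?conj (\<sigma> x) \<in> \<sigma> ` carrier G" using that image by blast
    then show "\<alpha> x \<in> carrier G" "\<sigma> (\<alpha> x) = ?conj (\<sigma> x)"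
      using that assms(3) by (auto simp: \<alpha>_def f_the_inv_into_f the_inv_into_into)
  qed
  have "\<alpha> \<in> hom G G"
  proof (rule homI)
    fix x y assume "x \<in> carrier G" "y \<in> carrier G"
    then have "\<sigma> (\<alpha> (x \<otimes> y)) = \<sigma> (\<alpha> x \<otimes> \<alpha> y)"
      using \<alpha> conj_mult real_rep_mult[OF assms(2)] by simp
    then show "\<alpha> (x \<otimes> y) = \<alpha> x \<otimes> \<alpha> y"
      using \<alpha> \<open>x \<in> carrier G\<close> \<open>y \<in> carrier G\<close> by (auto intro: inj_onD[OF assms(3)])
  qed (use \<alpha> in simp)
  moreover have "inj_on \<alpha> (carrier G)"
  proof (rule inj_onI)
    fix x y assume "x \<in> carrier G" "y \<in> carrier G" "\<alpha> x = \<alpha> y"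
    then have "?conj (\<sigma> x) = ?conj (\<sigma> y)" using \<alpha> by metis
    then show "x = y"
      using \<open>x \<in> carrier G\<close> \<open>y \<in> carrier G\<close> injD[OF conj_inj] inj_onD[OF assms(3)] by blast
  qed
  moreover have "\<alpha> ` carrier G = carrier G"
  proof (intro subset_antisym subsetI)
    fix y assume "y \<in> carrier G"
    then obtain x where "x \<in> carrier G" "\<sigma> y = \<sigma> (\<alpha> x)" using image \<alpha> by force
    then show "y \<in> \<alpha> ` carrier G"
      using \<alpha> \<open>y \<in> carrier G\<close> inj_onD[OF assms(3)] by blast
  qed (use \<alpha> in auto)
  ultimately have "\<alpha> \<in> auto G"
    unfolding auto_def Bij_def bij_betw_def by (simp add: \<alpha>_def)
  then show ?thesis using \<alpha> by blast
qed

lemma real_rep_twisted_normalizer: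
  fixes G (structure)
  assumes "group G" "real_rep G \<sigma>" "invertible m" "h \<in> carrier G" "x \<in> carrier G" "y \<in> carrier G"
    and "\<sigma> (h \<otimes> y \<otimes> inv h) = m ** \<sigma> x ** matrix_inv m"
  shows "(\<sigma> (inv h) ** m) ** \<sigma> x = \<sigma> y ** (\<sigma> (inv h) ** m)"
proof -
  interpret group G by fact
  note m = invertible_matrix_inv[OF assms(3)]
  have "\<sigma> (inv h) ** m ** \<sigma> x = \<sigma> (inv h) ** (m ** \<sigma> x ** matrix_inv m) ** m"
    using m(2) by (metis matrix_mul_assoc matrix_mul_rid)
  also have "\<dots> = \<sigma> (inv h) ** \<sigma> (h \<otimes> y \<otimes> inv h) ** m"
    by (simp only: assms(7))
  also have "\<dots> = (\<sigma> (inv h) ** \<sigma> h) ** \<sigma> y ** (\<sigma> (inv h) ** m)"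
    using assms(4,6) real_rep_mult[OF assms(2)] by (simp add: matrix_mul_assoc)
  finally show ?thesis using real_rep_inv(2)[OF assms(1,2,4)] by simp
qed

lemma split_extension_order_2_auto:
  fixes G (structure)
  assumes "group G" "split_extension_by_order (AutoGroup G) (Inn G) 2" "\<alpha> \<in> auto G"
  obtains h c where "h \<in> carrier G"
    "\<And>x. x \<in> carrier G \<Longrightarrow> c x \<in> carrier G \<and> c (c x) = x \<and> \<alpha> x = h \<otimes> c x \<otimes> inv h"
proof -
  interpret group G by fact
  interpret A: group "AutoGroup G" by (rule AutoGroup)
  have carrier_A: "carrier (AutoGroup G) = auto G" unfolding AutoGroup_def BijGroup_def by simp
  have mult_A: "f \<otimes>\<^bsub>AutoGroup G\<^esub> g = compose (carrier G) f g" if "f \<in> auto G" "g \<in> auto G" for f g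
    using that unfolding AutoGroup_def BijGroup_def auto_def by simp
  obtain C where "Inn G \<lhd> AutoGroup G" and C: "subgroup C (AutoGroup G)" "card C = 2"
    and decomp: "Inn G <#>\<^bsub>AutoGroup G\<^esub> C = carrier (AutoGroup G)"
    using assms(2) unfolding split_extension_by_order_def by blast
  obtain \<iota> c where "\<iota> \<in> Inn G" "c \<in> C" and "\<alpha> = \<iota> \<otimes>\<^bsub>AutoGroup G\<^esub> c"
    using assms(3) decomp unfolding carrier_A set_mult_def by blast
  moreover have "Inn G \<subseteq> auto G"
    using \<open>Inn G \<lhd> AutoGroup G\<close> normal_imp_subgroup subgroup.subset carrier_A by metis
  moreover have "C \<subseteq> auto G" using C(1) subgroup.subset carrier_A by metis
  ultimately have "c \<in> auto G" and \<alpha>: "\<alpha> = compose (carrier G) \<iota> c"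
    using mult_A by auto
  obtain h where h: "h \<in> carrier G" and \<iota>: "\<iota> = (\<lambda>x\<in>carrier G. h \<otimes> x \<otimes> inv h)"
    using \<open>\<iota> \<in> Inn G\<close> unfolding Inn_def by blast
  from \<open>c \<in> auto G\<close> have c_closed: "c x \<in> carrier G" if "x \<in> carrier G" for x
    using that unfolding auto_def hom_def by auto
  have "compose (carrier G) c c = (\<lambda>x\<in>carrier G. x)"
    using A.subgroup_card_2_square[OF C \<open>c \<in> C\<close>] mult_A[OF \<open>c \<in> auto G\<close> \<open>c \<in> auto G\<close>]
    by (simp add: AutoGroup_def BijGroup_def)
  then have "c (c x) = x" if "x \<in> carrier G" for x
    using that by (metis compose_eq restrict_apply')
  moreover have "\<alpha> x = h \<otimes> c x \<otimes> inv h" if "x \<in> carrier G" for x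
    using that c_closed by (simp add: \<alpha> \<iota> compose_eq)
  ultimately show ?thesis using that[OF h] c_closed by blast
qed

context odd_dim_irrep
begin

lemma eigenvalue_one_of_twisted_commuting:
  assumes "nontrivial_rep G \<sigma>" "inj_on \<sigma> (carrier G)"
    and c: "\<And>x. x \<in> carrier G \<Longrightarrow> c x \<in> carrier G \<and> c (c x) = x"
    and T: "\<And>x. x \<in> carrier G \<Longrightarrow> T ** \<sigma> x = \<sigma> (c x) ** T"
    and "\<bar>det T\<bar> = 1"
  shows "\<exists>k\<in>carrier G. has_eigenvalue_one (\<sigma> k ** T)"
proof -
  have "(T ** T) ** \<sigma> x = \<sigma> x ** (T ** T)" if "x \<in> carrier G" for x
    using T[OF that] T[of "c x"] c[OF that] by (metis matrix_mul_assoc)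
  then obtain s where "T ** T = s *\<^sub>R mat 1" using commutant_scalar by blast
  then have T_involution: "T ** T = mat 1"
    using scalar_square_eq_mat_1 odd_dim \<open>\<bar>det T\<bar> = 1\<close> by blast
  have one: "\<sigma> \<one> = mat 1" using real_rep_one[OF rep] by simp
  show ?thesis
  proof (cases "T = - mat 1")
    case False
    then show ?thesis
      using involution_eigenvector_one[OF T_involution] one
      unfolding has_eigenvalue_one_def by (metis matrix_mul_lid one_closed)
  next
    case True
    obtain t where t: "t \<in> carrier G" "t \<noteq> \<one>" "t \<otimes> t = \<one>"
      using even_order_involution[OF finite_carrier even_order[OF assms(1)]] by blast
    have "\<sigma> t ** \<sigma> t = mat 1" using t rep_mult one by metis
    moreover have "\<sigma> t \<noteq> mat 1" using t one inj_onD[OF assms(2)] one_closed by metis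
    ultimately obtain w where "w \<noteq> 0" "\<sigma> t *v w = - w"
      using involution_eigenvector_neg_one by blast
    then have "(\<sigma> t ** T) *v w = w"
      using True by (simp add: matrix_vector_mul_assoc[symmetric] uminus_matrix_vector_mult
          matrix_vector_mult_uminus)
    then show ?thesis using t(1) \<open>w \<noteq> 0\<close> unfolding has_eigenvalue_one_def by blast
  qed
qed

lemma eigenvalue_one_of_normalizer:
  assumes "simple_group G" "split_extension_by_order (AutoGroup G) (Inn G) 2"
    and "nontrivial_rep G \<sigma>" "in_GL_normalizer G \<sigma> m" "finite_order_mat m"
  shows "\<exists>k\<in>carrier G. has_eigenvalue_one (\<sigma> k ** m)"
proof -
  have inj: "inj_on \<sigma> (carrier G)"
    using simple_group_real_rep_inj_on[OF assms(1) rep assms(3)] .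
  obtain \<alpha> where "\<alpha> \<in> auto G" and \<alpha>: "\<forall>x\<in>carrier G. \<sigma> (\<alpha> x) = m ** \<sigma> x ** matrix_inv m"
    using normalizer_induces_auto[OF is_group rep inj assms(4)] by blast
  obtain h c where h: "h \<in> carrier G"
    and c: "\<And>x. x \<in> carrier G \<Longrightarrow> c x \<in> carrier G \<and> c (c x) = x \<and> \<alpha> x = h \<otimes> c x \<otimes> inv h"
    using split_extension_order_2_auto[OF is_group assms(2) \<open>\<alpha> \<in> auto G\<close>] by blast
  define T where "T = \<sigma> (inv h) ** m"
  have "T ** \<sigma> x = \<sigma> (c x) ** T" if "x \<in> carrier G" for x
    unfolding T_def using assms(4) h that c[OF that] \<alpha>
    by (intro real_rep_twisted_normalizer[OF is_group rep]) (auto simp: in_GL_normalizer_def)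
  moreover have "\<bar>det T\<bar> = 1"
    using real_rep_abs_det[OF is_group finite_carrier rep] abs_det_finite_order[OF assms(5)] h
    by (simp add: T_def det_mul abs_mult)
  ultimately obtain k where "k \<in> carrier G" "has_eigenvalue_one (\<sigma> k ** T)"
    using eigenvalue_one_of_twisted_commuting[OF assms(3) inj] c by blast
  then show ?thesis
    using h by (metis T_def inv_closed m_closed rep_mult matrix_mul_assoc)
qed

end

theorem lemma4p4p2:
  fixes G :: "('g, 'b) monoid_scheme"
  assumes "simple_group G"
    and "finite (carrier G)"
    and "\<not> comm_group G"
    and "split_extension_by_order (AutoGroup G) (Inn G) 2"
  shows "eigenvalue_one_property_dim TYPE('n::finite) G"
  unfolding eigenvalue_one_property_dim_def
proof (intro allI impI, elim conjE)
  fix \<sigma> :: "'g \<Rightarrow> real^'n^'n" and m :: "real^'n^'n"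
  assume "odd CARD('n)" "irreducible_rep G \<sigma>" "nontrivial_rep G \<sigma>"
    and "in_GL_normalizer G \<sigma> m" "finite_order_mat m"
  moreover have "odd_dim_irrep G \<sigma>"
    using assms(1,2) \<open>odd CARD('n)\<close> \<open>irreducible_rep G \<sigma>\<close>
    by (simp add: odd_dim_irrep_def odd_dim_irrep_axioms_def simple_group_def)
  ultimately show "\<exists>k\<in>carrier G. has_eigenvalue_one (\<sigma> k ** m)"
    using odd_dim_irrep.eigenvalue_one_of_normalizer assms(1,4) by blast
qed

end
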